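(* Let $X$ be a real Banach space and let $(x_n,f_n)\in S_X\times S_{X^*}$, $n\in\mathbb{N}$, satisfy $f_n(x_n)=1$ for each $n$. Let $(y,g)\in S_X\times S_{X^*}$ satisfy $g(y)=1$, where $y$ is a point of Gâteaux smoothness of the norm. For each $k\in\mathbb{N}$ let $(c_n^{(k)})_n$ be a finitely supported sequence of non-negative reals with $\sum_n c_n^{(k)}=1$, such that (i) $\sum_n c_n^{(k)}x_n\to y$ weakly as $k\to\infty$, and (ii) $\sum_n c_n^{(k)}f_n(y)\to 1$ as $k\to\infty$. Then $P_k:=\sum_n c_n^{(k)} f_n\otimes x_n\to g\otimes y$ in the weak operator topology as $k\to\infty$, and there exist finitely supported non-negative sequences $(d_n^{(l)})_n$ with $\sum_n d_n^{(l)}=1$ ($l\in\mathbb{N}$) such that $S_l:=\sum_n d_n^{(l)}f_n\otimes x_n\to g\otimes y$ in the strong operator topology as $l\to\infty$. Moreover, if each $(x_n,f_n)$ is a Flinn pair, then $(y,g)$ is a Flinn pair.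
   Context: For $f\in X^*$ and $x\in X$, $f\otimes x: X\to X$ is the operator $v\mapsto f(v)x$. A pair $(x,f)\in S_X\times X^*$ is a Flinn pair if $\|I-f\otimes x\|=1$, where $I$ is the identity operator on $X$. WOT: $T_k\to T$ iff $\varphi(T_kv)\to\varphi(Tv)$ for all $v\in X,\varphi\in X^*$; SOT: $T_kv\to Tv$ in norm for all $v\in X$. *)

theory Defs
  imports "HOL-Analysis.Analysis"
begin

definition rank_one :: "('a::real_normed_vector \<Rightarrow>\<^sub>L real) \<Rightarrow> 'a \<Rightarrow> ('a \<Rightarrow>\<^sub>L 'a)" where
  "rank_one f x = blinfun_scaleR_left x o\<^sub>L f"

definition flinn_pair :: "'a::real_normed_vector \<Rightarrow> ('a \<Rightarrow>\<^sub>L real) \<Rightarrow> bool" where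
  "flinn_pair x f \<longleftrightarrow> norm x = 1 \<and> norm (id_blinfun - rank_one f x) = 1"

definition gateaux_smooth_point :: "'a::real_normed_vector \<Rightarrow> bool" where
  "gateaux_smooth_point y \<longleftrightarrow>
     (\<exists>D :: 'a \<Rightarrow>\<^sub>L real. \<forall>h. ((\<lambda>t. (norm (y + t *\<^sub>R h) - norm y) / t) \<longlongrightarrow> D h) (at 0))"

definition weak_conv :: "(nat \<Rightarrow> 'a::real_normed_vector) \<Rightarrow> 'a \<Rightarrow> bool" where
  "weak_conv z y \<longleftrightarrow> (\<forall>\<phi> :: 'a \<Rightarrow>\<^sub>L real. (\<lambda>k. \<phi> (z k)) \<longlonglongrightarrow> \<phi> y)"

definition wot_conv :: "(nat \<Rightarrow> ('a::real_normed_vector \<Rightarrow>\<^sub>L 'a)) \<Rightarrow> ('a \<Rightarrow>\<^sub>L 'a) \<Rightarrow> bool" where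
  "wot_conv T S \<longleftrightarrow> (\<forall>v. \<forall>\<phi> :: 'a \<Rightarrow>\<^sub>L real. (\<lambda>k. \<phi> (T k v)) \<longlonglongrightarrow> \<phi> (S v))"

definition sot_conv :: "(nat \<Rightarrow> ('a::real_normed_vector \<Rightarrow>\<^sub>L 'a)) \<Rightarrow> ('a \<Rightarrow>\<^sub>L 'a) \<Rightarrow> bool" where
  "sot_conv T S \<longleftrightarrow> (\<forall>v. (\<lambda>k. T k v) \<longlonglongrightarrow> S v)"

definition fin_prob_seq :: "(nat \<Rightarrow> real) \<Rightarrow> bool" where
  "fin_prob_seq c \<longleftrightarrow> (\<forall>n. 0 \<le> c n) \<and> finite {n. c n \<noteq> 0} \<and> (\<Sum>n\<in>{n. c n \<noteq> 0}. c n) = 1"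

end

theory Submission
  imports Defs
begin

text \<open>
  Write \<open>P\<^sub>k\<close> for the average of \<open>f\<^sub>n \<otimes> x\<^sub>n\<close> and \<open>z\<^sub>k\<close> for the average of
  \<open>x\<^sub>n\<close> with weights \<open>c\<^sup>(\<^sup>k\<^sup>)\<close>.  For every vector \<open>v\<close>,
  \<open>P\<^sub>k v - g v \<cdot> z\<^sub>k\<close> is the average of \<open>(f\<^sub>n v - g v) x\<^sub>n\<close>.  Since every \<open>f\<^sub>n\<close> lies
  below the norm, \<open>f\<^sub>n v - g v\<close> is controlled by \<open>(1 - f\<^sub>n y)/t\<close> plus the error of
  the difference quotient of the norm at \<open>y\<close> with step \<open>t\<close>; by Gateaux smoothness
  (whose derivative must be \<open>g\<close>) and hypothesis (ii) the averaged deviation tends to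
  zero.  Hence \<open>P\<^sub>k v - g v \<cdot> z\<^sub>k \<rightarrow> 0\<close>, and weak convergence \<open>z\<^sub>k \<rightarrow> y\<close> gives WOT
  convergence.  Mazur's lemma turns the weakly convergent averages into norm
  convergent ones (new weights \<open>d\<^sup>(\<^sup>l\<^sup>)\<close>) keeping (ii), which gives SOT convergence.
  Finally \<open>norm (I - S) \<le> 1\<close> is convex in \<open>S\<close> and survives SOT limits, so
  \<open>norm (I - g \<otimes> y) \<le> 1\<close>, and the projection \<open>I - g \<otimes> y\<close> has norm at least one.
\<close>

definition sublinear :: "('a::real_vector \<Rightarrow> real) \<Rightarrow> bool" where
  "sublinear p \<longleftrightarrow> (\<forall>x y. p (x + y) \<le> p x + p y) \<and> (\<forall>t x. 0 < t \<longrightarrow> p (t *\<^sub>R x) \<le> t * p x)"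

lemma sublinear_add: "sublinear p \<Longrightarrow> p (x + y) \<le> p x + p y"
  unfolding sublinear_def by blast

lemma sublinear_scale_le: "sublinear p \<Longrightarrow> 0 < t \<Longrightarrow> p (t *\<^sub>R x) \<le> t * p x"
  unfolding sublinear_def by blast

lemma sublinear_zero:
  assumes "sublinear p" shows "p 0 = 0"
  using sublinear_scale_le[OF assms, of "1/2" 0] sublinear_scale_le[OF assms, of 2 0] by simp

lemma sublinear_scale:
  assumes p: "sublinear p" and t: "0 \<le> t"
  shows "p (t *\<^sub>R x) = t * p x"
proof (cases "t = 0")
  case True
  then show ?thesis using sublinear_zero[OF p] by simp
next
  case False
  with t have t: "0 < t" by simp
  have "p x = p ((1/t) *\<^sub>R (t *\<^sub>R x))" using t by simp
  also have "\<dots> \<le> (1/t) * p (t *\<^sub>R x)" using t by (intro sublinear_scale_le[OF p]) simp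
  finally have "t * p x \<le> p (t *\<^sub>R x)" using t by (simp add: field_simps)
  with sublinear_scale_le[OF p t, of x] show ?thesis by linarith
qed

lemma sublinear_neg_le: "sublinear p \<Longrightarrow> - p (- x) \<le> p x"
  using sublinear_add[of p x "-x"] sublinear_zero[of p] by simp

lemma sublinear_INF:
  fixes h :: "'i \<Rightarrow> 'a::real_vector \<Rightarrow> real"
  assumes ne: "I \<noteq> {}"
    and bdd: "\<And>x. bdd_below ((\<lambda>i. h i x) ` I)"
    and add: "\<And>i j x y. i \<in> I \<Longrightarrow> j \<in> I \<Longrightarrow> \<exists>k\<in>I. h k (x + y) \<le> h i x + h j y"
    and scale: "\<And>i t x. i \<in> I \<Longrightarrow> 0 < t \<Longrightarrow> \<exists>j\<in>I. h j (t *\<^sub>R x) \<le> t * h i x"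
  shows "sublinear (\<lambda>x. INF i\<in>I. h i x)"
proof -
  let ?p = "\<lambda>x. INF i\<in>I. h i x"
  have lower: "?p x \<le> h i x" if "i \<in> I" for i x
    using cINF_lower[OF bdd that] .
  have "?p (x + y) \<le> ?p x + ?p y" for x y
  proof -
    have "?p (x + y) - h j y \<le> h i x" if ij: "i \<in> I" "j \<in> I" for i j
    proof -
      obtain k where "k \<in> I" "h k (x + y) \<le> h i x + h j y"
        using add[OF ij] by blast
      with lower[of k "x + y"] show ?thesis by linarith
    qed
    then have "?p (x + y) - h j y \<le> ?p x" if "j \<in> I" for j
      using that by (intro cINF_greatest[OF ne]) auto
    then have "?p (x + y) - ?p x \<le> ?p y"
      by (intro cINF_greatest[OF ne]) (simp add: algebra_simps)
    then show ?thesis by simp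
  qed
  moreover have "?p (t *\<^sub>R x) \<le> t * ?p x" if t: "0 < t" for t x
  proof -
    have "?p (t *\<^sub>R x) / t \<le> h i x" if i: "i \<in> I" for i
    proof -
      obtain j where "j \<in> I" "h j (t *\<^sub>R x) \<le> t * h i x"
        using scale[OF i t] by blast
      with lower[of j "t *\<^sub>R x"] t show ?thesis by (simp add: field_simps)
    qed
    then have "?p (t *\<^sub>R x) / t \<le> ?p x"
      by (intro cINF_greatest[OF ne])
    then show ?thesis using t by (simp add: field_simps)
  qed
  ultimately show ?thesis unfolding sublinear_def by blast
qed

text \<open>This is the one-dimensional extension step of Hahn--Banach.\<close>

lemma sublinear_push:
  assumes q: "sublinear q"
  shows "\<exists>r. sublinear r \<and> r \<le> q \<and> r (- w) \<le> - q w"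
proof -
  define h where "h t x = q (x + t *\<^sub>R w) - t * q w" for t x
  have bdd: "- q (- x) \<le> h t x" if "0 \<le> t" for t x
    using sublinear_add[OF q, of "x + t *\<^sub>R w" "- x"] sublinear_scale[OF q that, of w]
    unfolding h_def by simp
  define r where "r x = (INF t\<in>{0..}. h t x)" for x
  have lower: "r x \<le> h t x" if "0 \<le> t" for t x
    unfolding r_def using bdd that by (intro cINF_lower) (auto simp: bdd_below_def)
  have "sublinear r"
    unfolding r_def[abs_def]
  proof (rule sublinear_INF)
    show "bdd_below ((\<lambda>t. h t x) ` {0..})" for x
      using bdd by (auto simp: bdd_below_def)
    show "\<exists>u\<in>{0..}. h u (x + y) \<le> h s x + h t y" if "s \<in> {0..}" "t \<in> {0..}" for s t x y
      using that sublinear_add[OF q, of "x + s *\<^sub>R w" "y + t *\<^sub>R w"]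
      by (intro bexI[of _ "s + t"]) (auto simp: h_def algebra_simps)
    show "\<exists>u\<in>{0..}. h u (a *\<^sub>R x) \<le> a * h s x" if "s \<in> {0..}" "0 < a" for s a x
      using that sublinear_scale[OF q, of a "x + s *\<^sub>R w"]
      by (intro bexI[of _ "a * s"]) (auto simp: h_def algebra_simps)
  qed auto
  moreover have "r \<le> q"
    using lower[of 0] by (simp add: le_fun_def h_def)
  moreover have "r (- w) \<le> - q w"
    using lower[of 1 "- w"] sublinear_zero[OF q] by (simp add: h_def)
  ultimately show ?thesis by blast
qed

text \<open>The infimum of a nonempty chain of sublinear functionals below \<open>p\<close> is a
  sublinear lower bound of the chain; the chain is bounded below by \<open>x \<mapsto> - p (- x)\<close>.\<close>

lemma sublinear_INF_chain:
  assumes ne: "C \<noteq> {}" and sub: "\<And>q. q \<in> C \<Longrightarrow> sublinear q \<and> q \<le> p"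
    and chain: "\<And>a b. a \<in> C \<Longrightarrow> b \<in> C \<Longrightarrow> a \<le> b \<or> b \<le> a"
  shows "sublinear (\<lambda>x. INF q\<in>C. q x)" and "\<And>q. q \<in> C \<Longrightarrow> (\<lambda>x. INF q\<in>C. q x) \<le> q"
proof -
  have bdd: "bdd_below ((\<lambda>q. q x) ` C)" for x
  proof -
    have "- p (- x) \<le> q x" if "q \<in> C" for q
    proof -
      have "sublinear q" "q (- x) \<le> p (- x)" using sub[OF that] by (auto simp: le_fun_def)
      then show ?thesis using sublinear_neg_le[of q x] by linarith
    qed
    then show ?thesis unfolding bdd_below_def by blast
  qed
  show "(\<lambda>x. INF q\<in>C. q x) \<le> q" if "q \<in> C" for q
    using cINF_lower[OF bdd that] by (simp add: le_fun_def)
  show "sublinear (\<lambda>x. INF q\<in>C. q x)"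
  proof (rule sublinear_INF[OF ne bdd])
    show "\<exists>k\<in>C. k (x + y) \<le> i x + j y" if ij: "i \<in> C" "j \<in> C" for i j x y
    proof -
      obtain k where k: "k \<in> C" "k \<le> i" "k \<le> j" using chain[OF ij] ij by blast
      then have "k (x + y) \<le> k x + k y" using sub by (blast intro: sublinear_add)
      moreover have "k x \<le> i x" "k y \<le> j y" using k by (auto simp: le_fun_def)
      ultimately show ?thesis using k(1) by (intro bexI[of _ k]) auto
    qed
    show "\<exists>j\<in>C. j (t *\<^sub>R x) \<le> t * i x" if "i \<in> C" "0 < t" for i t x
      using that sub by (blast intro: sublinear_scale_le)
  qed
qed

lemma sublinear_minimal_below:
  assumes p: "sublinear p"
  shows "\<exists>q. sublinear q \<and> q \<le> p \<and> (\<forall>r. sublinear r \<and> r \<le> q \<longrightarrow> r = q)"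
proof -
  define S where "S = {q. sublinear q \<and> q \<le> p}"
  have po: "partial_order_on S (relation_of (\<lambda>a b. b \<le> a) S)"
    by (rule partial_order_on_relation_ofI) auto
  have "\<exists>u\<in>S. \<forall>q\<in>C. u \<le> q" if C: "C \<in> Chains (relation_of (\<lambda>a b. b \<le> a) S)" for C
  proof (cases "C = {}")
    case True
    then show ?thesis using p unfolding S_def by auto
  next
    case False
    have CS: "\<And>q. q \<in> C \<Longrightarrow> sublinear q \<and> q \<le> p"
      using Chains_relation_of[OF C] unfolding S_def by auto
    have chain: "a \<le> b \<or> b \<le> a" if "a \<in> C" "b \<in> C" for a b
      using C that unfolding Chains_def relation_of_def by auto
    obtain q0 where "q0 \<in> C" using False by blast
    have inf: "sublinear (\<lambda>x. INF q\<in>C. q x)" "\<And>q. q \<in> C \<Longrightarrow> (\<lambda>x. INF q\<in>C. q x) \<le> q"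
      using sublinear_INF_chain[of C p] False CS chain by blast+
    have "(\<lambda>x. INF q\<in>C. q x) \<le> p"
      using inf(2)[OF \<open>q0 \<in> C\<close>] CS[OF \<open>q0 \<in> C\<close>] by (blast intro: order_trans)
    with inf show ?thesis unfolding S_def by blast
  qed
  then obtain q where q: "q \<in> S" "\<forall>r\<in>S. r \<le> q \<longrightarrow> r = q"
    using predicate_Zorn[OF po] by blast
  then show ?thesis unfolding S_def by (auto intro: order_trans)
qed

text \<open>A minimal sublinear functional is linear: by \<open>sublinear_push\<close> and
  minimality, \<open>q (-u) = - q u\<close>, and then subadditivity becomes additivity.\<close>

lemma minimal_sublinear_linear:
  assumes q: "sublinear q" and minimal: "\<And>r. sublinear r \<Longrightarrow> r \<le> q \<Longrightarrow> r = q"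
  shows "linear q"
proof -
  have neg: "q (- u) = - q u" for u
  proof -
    obtain r where "sublinear r" "r \<le> q" "r (- u) \<le> - q u"
      using sublinear_push[OF q] by blast
    then have "q (- u) \<le> - q u" using minimal by blast
    with sublinear_neg_le[OF q, of u] show ?thesis by linarith
  qed
  have "q (x + y) = q x + q y" for x y
    using sublinear_add[OF q, of x y] sublinear_add[OF q, of "x + y" "- y"] neg[of y] by simp
  moreover have "q (t *\<^sub>R x) = t * q x" for t x
  proof (cases "0 \<le> t")
    case True
    then show ?thesis using sublinear_scale[OF q] by blast
  next
    case False
    then have "q ((- t) *\<^sub>R x) = (- t) * q x" using sublinear_scale[OF q, of "- t"] by simp
    then show ?thesis using neg[of "(- t) *\<^sub>R x"] by simp
  qed
  ultimately show ?thesis by (intro linearI) auto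
qed

text \<open>Hahn--Banach (analytic form, starting from the zero subspace): every sublinear
  functional dominates a linear functional.\<close>

theorem sublinear_dominates_linear:
  assumes "sublinear p"
  shows "\<exists>\<phi>. linear \<phi> \<and> (\<forall>x. \<phi> x \<le> p x)"
proof -
  obtain q where "sublinear q" "q \<le> p" "\<forall>r. sublinear r \<and> r \<le> q \<longrightarrow> r = q"
    using sublinear_minimal_below[OF assms] by blast
  then have "linear q" by (intro minimal_sublinear_linear) auto
  with \<open>q \<le> p\<close> show ?thesis by (auto simp: le_fun_def)
qed

lemma linear_le_norm_bounded:
  fixes \<phi> :: "'a::real_normed_vector \<Rightarrow> real"
  assumes lin: "linear \<phi>" and le: "\<And>x. \<phi> x \<le> norm x"
  shows "bounded_linear \<phi>"
proof (rule bounded_linear_intro[where K = 1])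
  show "\<phi> (x + y) = \<phi> x + \<phi> y" for x y using linear_add[OF lin] .
  show "\<phi> (r *\<^sub>R x) = r *\<^sub>R \<phi> x" for r x using linear_scale[OF lin] .
  show "norm (\<phi> x) \<le> norm x * 1" for x
    using le[of x] le[of "- x"] linear_neg[OF lin, of x] by auto
qed

lemma convex_cone_combination:
  assumes K: "convex K" and k: "k1 \<in> K" "k2 \<in> K" and l: "0 \<le> l1" "0 \<le> l2"
  shows "\<exists>m\<in>K. l1 *\<^sub>R (k1 - y) + l2 *\<^sub>R (k2 - y) = (l1 + l2) *\<^sub>R (m - y)"
proof (cases "l1 + l2 = 0")
  case True
  with l have "l1 = 0" "l2 = 0" by auto
  with k show ?thesis by auto
next
  case False
  with l have pos: "0 < l1 + l2" by simp
  define m where "m = (l1 / (l1 + l2)) *\<^sub>R k1 + (l2 / (l1 + l2)) *\<^sub>R k2"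
  have "m \<in> K"
    unfolding m_def using l k K pos
    by (intro convexD) (auto simp: add_divide_distrib[symmetric])
  moreover have "(l1 + l2) *\<^sub>R m = l1 *\<^sub>R k1 + l2 *\<^sub>R k2"
    using pos unfolding m_def by (simp add: scaleR_add_right)
  then have "l1 *\<^sub>R (k1 - y) + l2 *\<^sub>R (k2 - y) = (l1 + l2) *\<^sub>R (m - y)"
    by (simp add: algebra_simps)
  ultimately show ?thesis by blast
qed

definition separation_gauge :: "'a::real_normed_vector set \<Rightarrow> 'a \<Rightarrow> real \<Rightarrow> 'a \<Rightarrow> real" where
  "separation_gauge K y \<delta> x = (INF z\<in>{0..} \<times> K. norm (x - fst z *\<^sub>R (snd z - y)) - fst z * \<delta>)"

text \<open>Each term of the infimum is at least \<open>- norm x\<close>, because \<open>norm (k - y) \<ge> \<delta>\<close>.\<close>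

lemma separation_gauge_bdd:
  fixes K :: "'a::real_normed_vector set"
  assumes far: "\<And>k. k \<in> K \<Longrightarrow> \<delta> \<le> dist y k"
  shows "bdd_below ((\<lambda>z. norm (x - fst z *\<^sub>R (snd z - y)) - fst z * \<delta>) ` ({0..} \<times> K))"
proof -
  have "- norm x \<le> norm (x - l *\<^sub>R (k - y)) - l * \<delta>" if "0 \<le> l" "k \<in> K" for l k
  proof -
    have "l * \<delta> \<le> l * norm (k - y)"
      using far[OF that(2)] that(1) by (intro mult_left_mono) (auto simp: dist_norm norm_minus_commute)
    moreover have "l * norm (k - y) \<le> norm x + norm (x - l *\<^sub>R (k - y))"
      using norm_triangle_ineq2[of "l *\<^sub>R (k - y)" x] that(1) by (simp add: norm_minus_commute)
    ultimately show ?thesis by linarith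
  qed
  then show ?thesis unfolding bdd_below_def by (intro exI[of _ "- norm x"]) auto
qed

lemma separation_gauge_le:
  fixes K :: "'a::real_normed_vector set"
  assumes far: "\<And>k. k \<in> K \<Longrightarrow> \<delta> \<le> dist y k" and "0 \<le> l" "k \<in> K"
  shows "separation_gauge K y \<delta> x \<le> norm (x - l *\<^sub>R (k - y)) - l * \<delta>"
proof -
  have "(l, k) \<in> {0..} \<times> K" using assms(2,3) by simp
  from cINF_lower[OF separation_gauge_bdd[where K = K and \<delta> = \<delta> and y = y, OF far] this] show ?thesis
    unfolding separation_gauge_def by simp
qed

lemma separation_gauge_sublinear:
  fixes K :: "'a::real_normed_vector set"
  assumes K: "convex K" "K \<noteq> {}" and far: "\<And>k. k \<in> K \<Longrightarrow> \<delta> \<le> dist y k"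
  shows "sublinear (separation_gauge K y \<delta>)"
  unfolding separation_gauge_def[abs_def]
proof (rule sublinear_INF[OF _ separation_gauge_bdd[where K = K and \<delta> = \<delta> and y = y, OF far]])
  let ?h = "\<lambda>z x. norm (x - fst z *\<^sub>R (snd z - y)) - fst z * \<delta>"
  show "{0::real..} \<times> K \<noteq> {}" using K(2) by auto
  show "\<exists>z\<in>{0..} \<times> K. ?h z (x1 + x2) \<le> ?h z1 x1 + ?h z2 x2"
    if z: "z1 \<in> {0..} \<times> K" "z2 \<in> {0..} \<times> K" for z1 z2 x1 x2
  proof -
    obtain l1 k1 l2 k2 where zs: "z1 = (l1, k1)" "z2 = (l2, k2)" by fastforce
    have l: "0 \<le> l1" "0 \<le> l2" and k: "k1 \<in> K" "k2 \<in> K" using z unfolding zs by auto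
    obtain m where m: "m \<in> K" and comb: "l1 *\<^sub>R (k1 - y) + l2 *\<^sub>R (k2 - y) = (l1 + l2) *\<^sub>R (m - y)"
      using convex_cone_combination[OF K(1) k l] by blast
    have "x1 + x2 - (l1 + l2) *\<^sub>R (m - y) = (x1 - l1 *\<^sub>R (k1 - y)) + (x2 - l2 *\<^sub>R (k2 - y))"
      unfolding comb[symmetric] by (simp add: algebra_simps)
    then have "?h (l1 + l2, m) (x1 + x2)
        = norm ((x1 - l1 *\<^sub>R (k1 - y)) + (x2 - l2 *\<^sub>R (k2 - y))) - (l1 + l2) * \<delta>"
      by (simp only: fst_conv snd_conv)
    also have "\<dots> \<le> ?h z1 x1 + ?h z2 x2"
      using norm_triangle_ineq[of "x1 - l1 *\<^sub>R (k1 - y)" "x2 - l2 *\<^sub>R (k2 - y)"]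
      unfolding zs by (simp add: algebra_simps)
    finally show ?thesis using m l by (intro bexI[of _ "(l1 + l2, m)"]) auto
  qed
  show "\<exists>z'\<in>{0..} \<times> K. ?h z' (t *\<^sub>R x) \<le> t * ?h z x"
    if "z \<in> {0..} \<times> K" "0 < t" for z t x
  proof
    show "(t * fst z, snd z) \<in> {0..} \<times> K" using that by auto
    have "t *\<^sub>R x - (t * fst z) *\<^sub>R (snd z - y) = t *\<^sub>R (x - fst z *\<^sub>R (snd z - y))"
      by (simp add: algebra_simps)
    then show "?h (t * fst z, snd z) (t *\<^sub>R x) \<le> t * ?h z x"
      using that by (simp add: right_diff_distrib)
  qed
qed

text \<open>Strict separation of a point from a convex set at distance at least \<open>\<delta>\<close>: any
  linear functional below the separation gauge is bounded (the gauge lies below the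
  norm) and separates, since the gauge is at most \<open>- \<delta>\<close> on \<open>K - y\<close>.\<close>

theorem separate_point_convex:
  fixes K :: "'a::real_normed_vector set"
  assumes K: "convex K" "K \<noteq> {}" and far: "\<And>k. k \<in> K \<Longrightarrow> \<delta> \<le> dist y k"
  shows "\<exists>\<phi> :: 'a \<Rightarrow>\<^sub>L real. \<forall>k\<in>K. \<phi> k + \<delta> \<le> \<phi> y"
proof -
  obtain \<phi> where \<phi>: "linear \<phi>" "\<And>x. \<phi> x \<le> separation_gauge K y \<delta> x"
    using sublinear_dominates_linear[OF separation_gauge_sublinear[where \<delta> = \<delta> and y = y, OF K far]] by blast
  obtain k0 where "k0 \<in> K" using K(2) by blast
  then have "\<phi> x \<le> norm x" for x
    using \<phi>(2)[of x] separation_gauge_le[where K = K and y = y and l = 0 and k = k0 and x = x, OF far] by simp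
  then have bl: "bounded_linear \<phi>" by (rule linear_le_norm_bounded[OF \<phi>(1)])
  have "\<phi> k + \<delta> \<le> \<phi> y" if "k \<in> K" for k
  proof -
    have "\<phi> (k - y) \<le> - \<delta>"
      using \<phi>(2)[of "k - y"] that
        separation_gauge_le[where K = K and y = y and l = 1 and k = k and x = "k - y", OF far]
      by simp
    then show ?thesis using linear_diff[OF \<phi>(1), of k y] by simp
  qed
  then show ?thesis
    using bounded_linear_Blinfun_apply[OF bl] by (intro exI[of _ "Blinfun \<phi>"]) simp
qed

theorem mazur:
  fixes z :: "nat \<Rightarrow> 'a::real_normed_vector"
  assumes w: "weak_conv z y" and e: "0 < \<epsilon>"
  shows "\<exists>m \<in> convex hull (z ` {N..}). dist y m < \<epsilon>"
proof (rule ccontr)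
  let ?H = "convex hull (z ` {N..})"
  assume "\<not> (\<exists>m \<in> ?H. dist y m < \<epsilon>)"
  then have far: "\<epsilon> \<le> dist y m" if "m \<in> ?H" for m using that by (meson not_le)
  have "z N \<in> ?H" by (rule hull_inc) auto
  then obtain \<phi> :: "'a \<Rightarrow>\<^sub>L real" where sep: "\<forall>m\<in>?H. \<phi> m + \<epsilon> \<le> \<phi> y"
    using separate_point_convex[OF convex_convex_hull _ far] by blast
  have "(\<lambda>k. \<phi> (z k)) \<longlonglongrightarrow> \<phi> y" using w unfolding weak_conv_def by blast
  then obtain M where M: "\<forall>k\<ge>M. norm (\<phi> (z k) - \<phi> y) < \<epsilon>"
    using LIMSEQ_D[OF _ e] by blast
  have "z (max M N) \<in> ?H" by (rule hull_inc) auto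
  with sep have "\<phi> (z (max M N)) + \<epsilon> \<le> \<phi> y" by blast
  moreover have "norm (\<phi> (z (max M N)) - \<phi> y) < \<epsilon>" using M by simp
  ultimately show False by simp
qed

definition prob_avg :: "(nat \<Rightarrow> real) \<Rightarrow> (nat \<Rightarrow> 'b::real_vector) \<Rightarrow> 'b" where
  "prob_avg c w = (\<Sum>n\<in>{n. c n \<noteq> 0}. c n *\<^sub>R w n)"

lemma prob_avg_over_superset:
  assumes "finite T" "{n. c n \<noteq> 0} \<subseteq> T"
  shows "prob_avg c w = (\<Sum>n\<in>T. c n *\<^sub>R w n)"
  unfolding prob_avg_def by (rule sum.mono_neutral_left) (use assms in auto)

lemma prob_avg_add: "prob_avg c (\<lambda>n. v n + w n) = prob_avg c v + prob_avg c w"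
  by (simp add: prob_avg_def scaleR_add_right sum.distrib)

lemma prob_avg_diff: "prob_avg c (\<lambda>n. v n - w n) = prob_avg c v - prob_avg c w"
  by (simp add: prob_avg_def scaleR_diff_right sum_subtractf)

lemma prob_avg_scaleR: "prob_avg c (\<lambda>n. a *\<^sub>R w n) = a *\<^sub>R prob_avg c w"
  by (simp add: prob_avg_def scaleR_sum_right mult.commute)

lemma prob_avg_bounded_linear:
  "bounded_linear L \<Longrightarrow> L (prob_avg c w) = prob_avg c (\<lambda>n. L (w n))"
  by (simp add: prob_avg_def linear_sum bounded_linear.linear linear_scale)

lemma prob_avg_const: "fin_prob_seq c \<Longrightarrow> prob_avg c (\<lambda>_. a) = a"
  by (simp add: prob_avg_def fin_prob_seq_def scaleR_sum_left[symmetric])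

lemma prob_avg_mono:
  fixes a b :: "nat \<Rightarrow> real"
  assumes "fin_prob_seq c" "\<And>n. a n \<le> b n"
  shows "prob_avg c a \<le> prob_avg c b"
  using assms unfolding prob_avg_def fin_prob_seq_def by (auto intro!: sum_mono mult_left_mono)

lemma prob_avg_nonneg:
  fixes a :: "nat \<Rightarrow> real"
  shows "fin_prob_seq c \<Longrightarrow> (\<And>n. 0 \<le> a n) \<Longrightarrow> 0 \<le> prob_avg c a"
  unfolding prob_avg_def by (auto simp: fin_prob_seq_def intro!: sum_nonneg)

lemma norm_prob_avg_le:
  assumes "fin_prob_seq c"
  shows "norm (prob_avg c w) \<le> prob_avg c (\<lambda>n. norm (w n))"
proof -
  have "norm (prob_avg c w) \<le> (\<Sum>n\<in>{n. c n \<noteq> 0}. norm (c n *\<^sub>R w n))"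
    unfolding prob_avg_def by (rule norm_sum)
  also have "\<dots> = prob_avg c (\<lambda>n. norm (w n))"
    using assms unfolding prob_avg_def fin_prob_seq_def by simp
  finally show ?thesis .
qed

lemma prob_avg_mixture:
  fixes c :: "'i \<Rightarrow> nat \<Rightarrow> real"
  assumes I: "finite I" and c: "\<And>i. i \<in> I \<Longrightarrow> fin_prob_seq (c i)"
  shows "prob_avg (\<lambda>n. \<Sum>i\<in>I. u i * c i n) w = (\<Sum>i\<in>I. u i *\<^sub>R prob_avg (c i) w)"
    and "finite {n. (\<Sum>i\<in>I. u i * c i n) \<noteq> 0}"
proof -
  define T where "T = (\<Union>i\<in>I. {n. c i n \<noteq> 0})"
  have T: "finite T" unfolding T_def using I c unfolding fin_prob_seq_def by auto
  have supp: "{n. (\<Sum>i\<in>I. u i * c i n) \<noteq> 0} \<subseteq> T"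
    unfolding T_def by (auto intro: ccontr)
  then show "finite {n. (\<Sum>i\<in>I. u i * c i n) \<noteq> 0}" using T by (rule finite_subset)
  have supp_i: "{n. c i n \<noteq> 0} \<subseteq> T" if "i \<in> I" for i
    unfolding T_def using that by auto
  have "prob_avg (\<lambda>n. \<Sum>i\<in>I. u i * c i n) w = (\<Sum>n\<in>T. \<Sum>i\<in>I. u i *\<^sub>R (c i n *\<^sub>R w n))"
    by (simp add: prob_avg_over_superset[OF T supp] scaleR_sum_left)
  also have "\<dots> = (\<Sum>i\<in>I. u i *\<^sub>R (\<Sum>n\<in>T. c i n *\<^sub>R w n))"
    by (subst sum.swap) (simp add: scaleR_sum_right)
  also have "\<dots> = (\<Sum>i\<in>I. u i *\<^sub>R prob_avg (c i) w)"
    by (intro sum.cong refl) (metis prob_avg_over_superset[OF T supp_i])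
  finally show "prob_avg (\<lambda>n. \<Sum>i\<in>I. u i * c i n) w = (\<Sum>i\<in>I. u i *\<^sub>R prob_avg (c i) w)" .
qed

lemma fin_prob_seq_mixture:
  fixes c :: "'i \<Rightarrow> nat \<Rightarrow> real"
  assumes I: "finite I" and u: "\<And>i. i \<in> I \<Longrightarrow> 0 \<le> u i" "sum u I = 1"
    and c: "\<And>i. i \<in> I \<Longrightarrow> fin_prob_seq (c i)"
  shows "fin_prob_seq (\<lambda>n. \<Sum>i\<in>I. u i * c i n)"
proof -
  have "(\<Sum>n\<in>{n. (\<Sum>i\<in>I. u i * c i n) \<noteq> 0}. \<Sum>i\<in>I. u i * c i n) = (\<Sum>i\<in>I. u i)"
    using prob_avg_mixture(1)[OF I c, where u = u and w = "\<lambda>_. 1::real"] c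
    by (simp add: prob_avg_def fin_prob_seq_def)
  moreover have "0 \<le> (\<Sum>i\<in>I. u i * c i n)" for n
    using u c unfolding fin_prob_seq_def by (auto intro!: sum_nonneg)
  ultimately show ?thesis
    using prob_avg_mixture(2)[OF I c] u unfolding fin_prob_seq_def by auto
qed

lemma prob_avg_mult_left:
  fixes w :: "nat \<Rightarrow> real"
  shows "prob_avg c (\<lambda>n. a * w n) = a * prob_avg c w"
  using prob_avg_scaleR[of c a w] by simp

lemma blinfun_le_norm: "norm g \<le> 1 \<Longrightarrow> blinfun_apply (g :: 'a::real_normed_vector \<Rightarrow>\<^sub>L real) u \<le> norm u"
  using norm_blinfun[of g u] mult_right_mono[of "norm g" 1 "norm u"] by simp

text \<open>At a point of Gateaux smoothness the derivative of the norm is the norming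
  functional: the difference quotients are bounded below by \<open>g h\<close> for \<open>t > 0\<close> and
  above for \<open>t < 0\<close>.\<close>

lemma norming_functional_is_gateaux_derivative:
  fixes y :: "'a::real_normed_vector" and g :: "'a \<Rightarrow>\<^sub>L real"
  assumes smooth: "gateaux_smooth_point y" and y: "norm y = 1" and g: "norm g \<le> 1" "g y = 1"
  shows "((\<lambda>t. (norm (y + t *\<^sub>R h) - 1) / t) \<longlongrightarrow> g h) (at 0)"
proof -
  obtain D :: "'a \<Rightarrow>\<^sub>L real" where "((\<lambda>t. (norm (y + t *\<^sub>R h) - norm y) / t) \<longlongrightarrow> D h) (at 0)"
    using smooth unfolding gateaux_smooth_point_def by blast
  with y have D: "((\<lambda>t. (norm (y + t *\<^sub>R h) - 1) / t) \<longlongrightarrow> D h) (at 0)" by simp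
  have supporting: "t * g h \<le> norm (y + t *\<^sub>R h) - 1" for t
    using blinfun_le_norm[OF g(1), of "y + t *\<^sub>R h"] g(2)
    by (simp add: blinfun.add_right blinfun.scaleR_right)
  have "\<forall>\<^sub>F t in at_right 0. g h \<le> (norm (y + t *\<^sub>R h) - 1) / t"
    using supporting by (auto simp: eventually_at_filter field_simps)
  then have "g h \<le> D h"
    using D by (intro tendsto_le[OF trivial_limit_at_right_real _ tendsto_const])
      (auto simp: filterlim_at_split)
  moreover have "\<forall>\<^sub>F t in at_left 0. (norm (y + t *\<^sub>R h) - 1) / t \<le> g h"
    using supporting by (auto simp: eventually_at_filter field_simps)
  then have "D h \<le> g h"
    using D by (intro tendsto_le[OF trivial_limit_at_left_real tendsto_const])
      (auto simp: filterlim_at_split)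
  ultimately show ?thesis using D by simp
qed

definition smoothness_defect :: "'a::real_normed_vector \<Rightarrow> ('a \<Rightarrow>\<^sub>L real) \<Rightarrow> 'a \<Rightarrow> real \<Rightarrow> real" where
  "smoothness_defect y g v t =
     \<bar>(norm (y + t *\<^sub>R v) - 1) / t - g v\<bar> + \<bar>(norm (y - t *\<^sub>R v) - 1) / t + g v\<bar>"

lemma smoothness_defect_tendsto:
  fixes y :: "'a::real_normed_vector" and g :: "'a \<Rightarrow>\<^sub>L real"
  assumes "gateaux_smooth_point y" "norm y = 1" "norm g \<le> 1" "g y = 1"
  shows "(smoothness_defect y g v \<longlongrightarrow> 0) (at_right 0)"
proof -
  have "((\<lambda>t. (norm (y + t *\<^sub>R h) - 1) / t - g h) \<longlongrightarrow> 0) (at_right 0)" for h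
    using tendsto_diff[OF norming_functional_is_gateaux_derivative[OF assms, of h] tendsto_const,
        of "g h"]
    by (simp add: filterlim_at_split)
  from tendsto_add[OF tendsto_rabs[OF this[of v]] tendsto_rabs[OF this[of "- v"]]]
  show ?thesis
    unfolding smoothness_defect_def[abs_def] by (simp add: blinfun.minus_right)
qed

lemma functional_deviation_bound:
  fixes y :: "'a::real_normed_vector" and f g :: "'a \<Rightarrow>\<^sub>L real"
  assumes f: "norm f \<le> 1" and t: "0 < t"
  shows "\<bar>f v - g v\<bar> \<le> (1 - f y) / t + smoothness_defect y g v t"
proof -
  have "f h - g h \<le> (1 - f y) / t + ((norm (y + t *\<^sub>R h) - 1) / t - g h)" for h
  proof -
    have "t * f h \<le> norm (y + t *\<^sub>R h) - f y"
      using blinfun_le_norm[OF f, of "y + t *\<^sub>R h"] by (simp add: blinfun.add_right blinfun.scaleR_right)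
    then have "f h \<le> (norm (y + t *\<^sub>R h) - f y) / t"
      using t by (simp add: pos_le_divide_eq mult.commute)
    also have "\<dots> = (1 - f y) / t + (norm (y + t *\<^sub>R h) - 1) / t"
      by (simp add: diff_divide_distrib)
    finally show ?thesis by linarith
  qed
  from this[of v] this[of "- v"] show ?thesis
    unfolding smoothness_defect_def by (simp add: blinfun.minus_right)
qed

text \<open>If the averages of \<open>f\<^sub>n y\<close> tend to one, the averaged deviations
  \<open>\<bar>f\<^sub>n v - g v\<bar>\<close> tend to zero: first fix a small step \<open>t\<close>, then a late index.\<close>

lemma averaged_deviation_tendsto_zero:
  fixes y :: "'a::real_normed_vector" and g :: "'a \<Rightarrow>\<^sub>L real" and f :: "nat \<Rightarrow> 'a \<Rightarrow>\<^sub>L real"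
  assumes smooth: "gateaux_smooth_point y" and yg: "norm y = 1" "norm g \<le> 1" "g y = 1"
    and f: "\<And>n. norm (f n) \<le> 1" and c: "\<And>k. fin_prob_seq (c k)"
    and lim: "(\<lambda>k. prob_avg (c k) (\<lambda>n. f n y)) \<longlonglongrightarrow> 1"
  shows "(\<lambda>k. prob_avg (c k) (\<lambda>n. \<bar>f n v - g v\<bar>)) \<longlonglongrightarrow> 0"
proof (rule LIMSEQ_I)
  fix r :: real assume r: "0 < r"
  have "\<forall>\<^sub>F t in at_right 0. smoothness_defect y g v t < r / 2"
    using smoothness_defect_tendsto[OF smooth yg, of v] r unfolding order_tendsto_iff
    by (metis half_gt_zero)
  then obtain t where t: "0 < t" "smoothness_defect y g v t < r / 2"
    unfolding eventually_at_right_field by (metis field_lbound_gt_zero zero_less_one)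
  obtain N where N: "\<forall>k\<ge>N. norm (prob_avg (c k) (\<lambda>n. f n y) - 1) < r * t / 2"
    using LIMSEQ_D[OF lim, of "r * t / 2"] r t by auto
  have "norm (prob_avg (c k) (\<lambda>n. \<bar>f n v - g v\<bar>) - 0) < r" if "k \<ge> N" for k
  proof -
    have "prob_avg (c k) (\<lambda>n. \<bar>f n v - g v\<bar>)
        \<le> prob_avg (c k) (\<lambda>n. (1 - f n y) / t + smoothness_defect y g v t)"
      by (intro prob_avg_mono[OF c] functional_deviation_bound[OF f t(1)])
    also have "\<dots> = (1 - prob_avg (c k) (\<lambda>n. f n y)) / t + smoothness_defect y g v t"
      by (simp add: divide_inverse mult.commute[of _ "inverse t"] prob_avg_add prob_avg_diff
          prob_avg_mult_left prob_avg_const[OF c])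
    also have "\<dots> < r"
    proof -
      have "1 - prob_avg (c k) (\<lambda>n. f n y) < r * t / 2"
        using N that unfolding real_norm_def abs_less_iff by fastforce
      then have "(1 - prob_avg (c k) (\<lambda>n. f n y)) / t < r / 2" using t by (simp add: divide_less_eq)
      with t(2) show ?thesis by linarith
    qed
    finally show ?thesis
      using prob_avg_nonneg[OF c, of "\<lambda>n. \<bar>f n v - g v\<bar>" k] by simp
  qed
  then show "\<exists>N. \<forall>k\<ge>N. norm (prob_avg (c k) (\<lambda>n. \<bar>f n v - g v\<bar>) - 0) < r" by blast
qed

lemma rank_one_apply [simp]: "rank_one f x v = f v *\<^sub>R x"
  by (simp add: rank_one_def)

lemma prob_avg_blinfun_apply: "blinfun_apply (prob_avg c T) v = prob_avg c (\<lambda>n. T n v)"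
  using prob_avg_bounded_linear[OF blinfun.bounded_linear_left, of c T v] by simp

text \<open>\<open>P v - g v \<cdot> z\<close>, for the averaged operator \<open>P\<close> and averaged vector \<open>z\<close>, is the
  average of \<open>(f\<^sub>n v - g v) x\<^sub>n\<close>, hence is bounded by the averaged deviation.\<close>

lemma rank_one_average_defect:
  fixes x :: "nat \<Rightarrow> 'a::real_normed_vector" and f :: "nat \<Rightarrow> 'a \<Rightarrow>\<^sub>L real"
    and g :: "'a \<Rightarrow>\<^sub>L real"
  assumes c: "fin_prob_seq c" and x: "\<And>n. norm (x n) \<le> 1"
  shows "norm (prob_avg c (\<lambda>n. rank_one (f n) (x n)) v - g v *\<^sub>R prob_avg c x)
    \<le> prob_avg c (\<lambda>n. \<bar>f n v - g v\<bar>)"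
proof -
  have "prob_avg c (\<lambda>n. rank_one (f n) (x n)) v - g v *\<^sub>R prob_avg c x
      = prob_avg c (\<lambda>n. (f n v - g v) *\<^sub>R x n)"
    by (simp add: prob_avg_blinfun_apply prob_avg_scaleR[symmetric] prob_avg_diff[symmetric]
        scaleR_diff_left)
  also have "norm \<dots> \<le> prob_avg c (\<lambda>n. norm ((f n v - g v) *\<^sub>R x n))"
    by (rule norm_prob_avg_le[OF c])
  also have "\<dots> \<le> prob_avg c (\<lambda>n. \<bar>f n v - g v\<bar>)"
    using x by (intro prob_avg_mono[OF c]) (simp add: mult_left_le)
  finally show ?thesis .
qed

lemma rank_one_average_defect_tendsto:
  fixes x :: "nat \<Rightarrow> 'a::real_normed_vector" and f :: "nat \<Rightarrow> 'a \<Rightarrow>\<^sub>L real"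
    and g :: "'a \<Rightarrow>\<^sub>L real"
  assumes smooth: "gateaux_smooth_point y" and yg: "norm y = 1" "norm g \<le> 1" "g y = 1"
    and xf: "\<And>n. norm (x n) \<le> 1" "\<And>n. norm (f n) \<le> 1" and c: "\<And>k. fin_prob_seq (c k)"
    and lim: "(\<lambda>k. prob_avg (c k) (\<lambda>n. f n y)) \<longlonglongrightarrow> 1"
  shows "(\<lambda>k. prob_avg (c k) (\<lambda>n. rank_one (f n) (x n)) v - g v *\<^sub>R prob_avg (c k) x) \<longlonglongrightarrow> 0"
  using averaged_deviation_tendsto_zero[OF smooth yg xf(2) c lim, of v]
  by (rule Lim_null_comparison[rotated]) (intro always_eventually allI rank_one_average_defect c xf)

lemma wot_conv_rank_one:
  fixes T :: "nat \<Rightarrow> 'a::real_normed_vector \<Rightarrow>\<^sub>L 'a" and g :: "'a \<Rightarrow>\<^sub>L real"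
  assumes defect: "\<And>v. (\<lambda>k. T k v - g v *\<^sub>R z k) \<longlonglongrightarrow> 0" and z: "weak_conv z y"
  shows "wot_conv T (rank_one g y)"
  unfolding wot_conv_def
proof (intro allI)
  fix v and \<phi> :: "'a \<Rightarrow>\<^sub>L real"
  have "(\<lambda>k. \<phi> (z k)) \<longlonglongrightarrow> \<phi> y" using z unfolding weak_conv_def by blast
  then have "(\<lambda>k. \<phi> (T k v - g v *\<^sub>R z k) + g v * \<phi> (z k)) \<longlonglongrightarrow> \<phi> 0 + g v * \<phi> y"
    by (intro tendsto_add tendsto_mult_left blinfun.tendsto[OF tendsto_const defect])
  then show "(\<lambda>k. \<phi> (T k v)) \<longlonglongrightarrow> \<phi> (rank_one g y v)"
    by (simp add: blinfun.diff_right blinfun.scaleR_right)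
qed

lemma sot_conv_rank_one:
  fixes T :: "nat \<Rightarrow> 'a::real_normed_vector \<Rightarrow>\<^sub>L 'a" and g :: "'a \<Rightarrow>\<^sub>L real"
  assumes defect: "\<And>v. (\<lambda>k. T k v - g v *\<^sub>R z k) \<longlonglongrightarrow> 0" and z: "z \<longlonglongrightarrow> y"
  shows "sot_conv T (rank_one g y)"
  unfolding sot_conv_def
proof
  fix v
  have "(\<lambda>k. (T k v - g v *\<^sub>R z k) + g v *\<^sub>R z k) \<longlonglongrightarrow> 0 + g v *\<^sub>R y"
    by (intro tendsto_intros defect z)
  then show "(\<lambda>k. T k v) \<longlonglongrightarrow> rank_one g y v" by simp
qed

lemma sot_conv_const_minus:
  fixes T :: "nat \<Rightarrow> 'a::real_normed_vector \<Rightarrow>\<^sub>L 'a"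
  shows "sot_conv T S \<Longrightarrow> sot_conv (\<lambda>k. A - T k) (A - S)"
  unfolding sot_conv_def by (auto simp: blinfun.diff_left intro: tendsto_diff)

lemma norm_le_of_sot_limit:
  fixes T :: "nat \<Rightarrow> 'a::real_normed_vector \<Rightarrow>\<^sub>L 'a"
  assumes lim: "sot_conv T S" and bound: "\<And>k. norm (T k) \<le> M"
  shows "norm S \<le> M"
proof (rule norm_blinfun_bound)
  show "0 \<le> M" using norm_ge_zero[of "T 0"] bound[of 0] by linarith
  fix v
  have "(\<lambda>k. norm (T k v)) \<longlonglongrightarrow> norm (S v)"
    using lim unfolding sot_conv_def by (intro tendsto_norm) blast
  moreover have "norm (T k v) \<le> M * norm v" for k
    using norm_blinfun[of "T k" v] bound[of k] by (meson mult_right_mono norm_ge_zero order_trans)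
  ultimately show "norm (S v) \<le> M * norm v" by (auto intro: LIMSEQ_le_const2)
qed

lemma norm_id_minus_average_le:
  fixes T :: "nat \<Rightarrow> 'a::real_normed_vector \<Rightarrow>\<^sub>L 'a"
  assumes c: "fin_prob_seq c" and T: "\<And>n. norm (id_blinfun - T n) \<le> 1"
  shows "norm (id_blinfun - prob_avg c T) \<le> 1"
proof -
  have "id_blinfun - prob_avg c T = prob_avg c (\<lambda>n. id_blinfun - T n)"
    by (simp add: prob_avg_diff prob_avg_const[OF c])
  also have "norm \<dots> \<le> prob_avg c (\<lambda>n. norm (id_blinfun - T n))"
    by (rule norm_prob_avg_le[OF c])
  also have "\<dots> \<le> prob_avg c (\<lambda>_. 1)"
    by (rule prob_avg_mono[OF c T])
  finally show ?thesis by (simp add: prob_avg_const[OF c])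
qed

text \<open>\<open>I - g \<otimes> y\<close> is a projection; it is zero only if the space is spanned by \<open>y\<close>, in
  which case no pair \<open>(x, f)\<close> with \<open>f x = 1\<close> is a Flinn pair; otherwise its norm
  is at least one.\<close>

lemma rank_one_eq_id:
  fixes y :: "'a::real_normed_vector" and f g :: "'a \<Rightarrow>\<^sub>L real"
  assumes span: "\<And>v. v = g v *\<^sub>R y" and fx: "f x = 1"
  shows "rank_one f x = id_blinfun"
proof (rule blinfun_eqI)
  fix v
  have "f y * g x = 1" using fx span[of x] by (metis blinfun.scaleR_right mult.commute real_scaleR_def)
  then have "f v *\<^sub>R x = g v *\<^sub>R y"
    by (subst (1 2) span) (simp add: blinfun.scaleR_right)
  then show "rank_one f x v = id_blinfun v" using span[of v] by simp
qed

lemma one_le_norm_id_minus_rank_one: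
  fixes y :: "'a::real_normed_vector" and g :: "'a \<Rightarrow>\<^sub>L real"
  assumes gy: "g y = 1" and w: "w \<noteq> g w *\<^sub>R y"
  shows "1 \<le> norm (id_blinfun - rank_one g y)"
proof -
  define u where "u = w - g w *\<^sub>R y"
  have "g u = 0" using gy unfolding u_def by (simp add: blinfun.diff_right blinfun.scaleR_right)
  then have "(id_blinfun - rank_one g y) u = u" by (simp add: blinfun.diff_left)
  then have "norm u \<le> norm (id_blinfun - rank_one g y) * norm u"
    using norm_blinfun[of "id_blinfun - rank_one g y" u] by simp
  moreover have "0 < norm u" using w unfolding u_def by simp
  ultimately show ?thesis by simp
qed

lemma flinn_pair_of_norm_le:
  fixes y x0 :: "'a::real_normed_vector" and g f0 :: "'a \<Rightarrow>\<^sub>L real"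
  assumes y: "norm y = 1" "g y = 1" and le: "norm (id_blinfun - rank_one g y) \<le> 1"
    and flinn: "flinn_pair x0 f0" and f0: "f0 x0 = 1"
  shows "flinn_pair y g"
proof (cases "\<forall>v. v = g v *\<^sub>R y")
  case True
  then have "rank_one f0 x0 = id_blinfun" using rank_one_eq_id[of g y f0 x0] f0 by blast
  then have "norm (id_blinfun - rank_one f0 x0) = 0" by simp
  with flinn show ?thesis unfolding flinn_pair_def by simp
next
  case False
  then have "1 \<le> norm (id_blinfun - rank_one g y)" using one_le_norm_id_minus_rank_one[OF y(2)] by blast
  with le y show ?thesis unfolding flinn_pair_def by simp
qed

lemma convex_combination_close:
  fixes a u :: "'i \<Rightarrow> real"
  assumes u: "\<And>i. i \<in> I \<Longrightarrow> 0 \<le> u i" "sum u I = 1" and a: "\<And>i. i \<in> I \<Longrightarrow> \<bar>a i - \<alpha>\<bar> \<le> \<epsilon>"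
  shows "\<bar>(\<Sum>i\<in>I. u i * a i) - \<alpha>\<bar> \<le> \<epsilon>"
proof -
  have "\<bar>(\<Sum>i\<in>I. u i * a i) - \<alpha>\<bar> = \<bar>\<Sum>i\<in>I. u i * (a i - \<alpha>)\<bar>"
    using u(2) by (simp add: right_diff_distrib sum_subtractf sum_distrib_right[symmetric])
  also have "\<dots> \<le> (\<Sum>i\<in>I. u i * \<epsilon>)"
    using u(1) a by (intro order_trans[OF sum_abs sum_mono]) (simp add: abs_mult mult_left_mono)
  also have "\<dots> = \<epsilon>" using u(2) by (simp add: sum_distrib_right[symmetric])
  finally show ?thesis .
qed

text \<open>By Mazur's lemma applied to a tail on which the scalar averages are already close
  to \<open>\<alpha>\<close>, one convex combination of the given averages is close in norm to \<open>y\<close>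
  while keeping the scalar average close to \<open>\<alpha>\<close>.\<close>

lemma close_average_exists:
  fixes x :: "nat \<Rightarrow> 'a::real_normed_vector" and a :: "nat \<Rightarrow> real"
  assumes c: "\<And>k. fin_prob_seq (c k)"
    and weak: "weak_conv (\<lambda>k. prob_avg (c k) x) y"
    and lim: "(\<lambda>k. prob_avg (c k) a) \<longlonglongrightarrow> \<alpha>" and e: "0 < \<epsilon>"
  shows "\<exists>d. fin_prob_seq d \<and> dist (prob_avg d x) y < \<epsilon> \<and> \<bar>prob_avg d a - \<alpha>\<bar> \<le> \<epsilon>"
proof -
  obtain N where "\<And>k. N \<le> k \<Longrightarrow> \<bar>prob_avg (c k) a - \<alpha>\<bar> < \<epsilon>"
    using LIMSEQ_D[OF lim e] by auto
  then have N: "\<And>k. N \<le> k \<Longrightarrow> \<bar>prob_avg (c k) a - \<alpha>\<bar> \<le> \<epsilon>" by (simp add: order.strict_implies_order)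
  obtain m where m: "m \<in> convex hull ((\<lambda>k. prob_avg (c k) x) ` {N..})" "dist y m < \<epsilon>"
    using mazur[OF weak e] by blast
  then obtain K u p where up: "\<forall>i\<in>{1::nat..K}. 0 \<le> u i \<and> p i \<in> (\<lambda>k. prob_avg (c k) x) ` {N..}"
      "sum u {1..K} = 1" "(\<Sum>i = 1..K. u i *\<^sub>R p i) = m"
    unfolding convex_hull_indexed by blast
  have "\<forall>i\<in>{1..K}. \<exists>k. N \<le> k \<and> p i = prob_avg (c k) x" using up(1) by auto
  then obtain \<kappa> where \<kappa>: "\<And>i. i \<in> {1..K} \<Longrightarrow> N \<le> \<kappa> i \<and> p i = prob_avg (c (\<kappa> i)) x"
    by metis
  define d where "d n = (\<Sum>i\<in>{1..K}. u i * c (\<kappa> i) n)" for n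
  have cK: "\<And>i. i \<in> {1..K} \<Longrightarrow> fin_prob_seq (c (\<kappa> i))" using c by blast
  have "fin_prob_seq d"
    unfolding d_def[abs_def] using up(1,2) by (intro fin_prob_seq_mixture cK) auto
  moreover have "prob_avg d x = m"
  proof -
    have "prob_avg d x = (\<Sum>i\<in>{1..K}. u i *\<^sub>R prob_avg (c (\<kappa> i)) x)"
      unfolding d_def[abs_def] by (rule prob_avg_mixture(1)) (use cK in auto)
    also have "\<dots> = m" using up(3) \<kappa> by (metis (no_types, lifting) sum.cong)
    finally show ?thesis .
  qed
  moreover have "\<bar>prob_avg d a - \<alpha>\<bar> \<le> \<epsilon>"
  proof -
    have "prob_avg d a = (\<Sum>i\<in>{1..K}. u i * prob_avg (c (\<kappa> i)) a)"
      unfolding d_def[abs_def] by (subst prob_avg_mixture(1)) (use cK in auto)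
    moreover have "\<bar>(\<Sum>i\<in>{1..K}. u i * prob_avg (c (\<kappa> i)) a) - \<alpha>\<bar> \<le> \<epsilon>"
      using up(1,2) N \<kappa> by (intro convex_combination_close) auto
    ultimately show ?thesis by simp
  qed
  ultimately show ?thesis using m(2) by (auto simp: dist_commute)
qed

lemma strongly_convergent_averages:
  fixes x :: "nat \<Rightarrow> 'a::real_normed_vector" and a :: "nat \<Rightarrow> real"
  assumes c: "\<And>k. fin_prob_seq (c k)"
    and weak: "weak_conv (\<lambda>k. prob_avg (c k) x) y"
    and lim: "(\<lambda>k. prob_avg (c k) a) \<longlonglongrightarrow> \<alpha>"
  shows "\<exists>d. (\<forall>l. fin_prob_seq (d l)) \<and> (\<lambda>l. prob_avg (d l) x) \<longlonglongrightarrow> y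
    \<and> (\<lambda>l. prob_avg (d l) a) \<longlonglongrightarrow> \<alpha>"
proof -
  have "\<exists>d. fin_prob_seq d \<and> dist (prob_avg d x) y < inverse (Suc l)
      \<and> \<bar>prob_avg d a - \<alpha>\<bar> \<le> inverse (Suc l)" for l
    by (rule close_average_exists[OF c weak lim]) simp
  then obtain d where d: "\<And>l. fin_prob_seq (d l)"
    "\<And>l. dist (prob_avg (d l) x) y < inverse (Suc l)"
    "\<And>l. \<bar>prob_avg (d l) a - \<alpha>\<bar> \<le> inverse (Suc l)"
    by (metis (no_types))
  have dist_lim: "(\<lambda>l. dist (prob_avg (d l) x) y) \<longlonglongrightarrow> 0"
  proof (rule Lim_null_comparison[OF always_eventually LIMSEQ_inverse_real_of_nat], intro allI)
    show "norm (dist (prob_avg (d l) x) y) \<le> inverse (real (Suc l))" for l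
      using d(2)[of l] by simp
  qed
  have diff_lim: "(\<lambda>l. prob_avg (d l) a - \<alpha>) \<longlonglongrightarrow> 0"
  proof (rule Lim_null_comparison[OF always_eventually LIMSEQ_inverse_real_of_nat], intro allI)
    show "norm (prob_avg (d l) a - \<alpha>) \<le> inverse (real (Suc l))" for l
      using d(3)[of l] by simp
  qed
  show ?thesis
  proof (rule exI[of _ d], intro conjI)
    show "\<forall>l. fin_prob_seq (d l)" using d(1) by blast
    show "(\<lambda>l. prob_avg (d l) x) \<longlonglongrightarrow> y" using dist_lim by (rule tendsto_dist_iff[THEN iffD2])
    show "(\<lambda>l. prob_avg (d l) a) \<longlonglongrightarrow> \<alpha>" using diff_lim by (rule LIM_zero_cancel)
  qed
qed

theorem lemma2p3:
  fixes x :: "nat \<Rightarrow> 'a::banach" and f :: "nat \<Rightarrow> ('a \<Rightarrow>\<^sub>L real)"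
    and y :: 'a and g :: "'a \<Rightarrow>\<^sub>L real" and c :: "nat \<Rightarrow> nat \<Rightarrow> real"
  assumes xf: "\<And>n. norm (x n) = 1 \<and> norm (f n) = 1 \<and> f n (x n) = 1"
    and yg: "norm y = 1" "norm g = 1" "g y = 1"
    and smooth: "gateaux_smooth_point y"
    and c: "\<And>k. fin_prob_seq (c k)"
    and i: "weak_conv (\<lambda>k. \<Sum>n\<in>{n. c k n \<noteq> 0}. c k n *\<^sub>R x n) y"
    and ii: "(\<lambda>k. \<Sum>n\<in>{n. c k n \<noteq> 0}. c k n * f n y) \<longlonglongrightarrow> 1"
  shows "wot_conv (\<lambda>k. \<Sum>n\<in>{n. c k n \<noteq> 0}. c k n *\<^sub>R rank_one (f n) (x n)) (rank_one g y)
    \<and> (\<exists>d :: nat \<Rightarrow> nat \<Rightarrow> real. (\<forall>l. fin_prob_seq (d l)) \<and>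
          sot_conv (\<lambda>l. \<Sum>n\<in>{n. d l n \<noteq> 0}. d l n *\<^sub>R rank_one (f n) (x n)) (rank_one g y))
    \<and> ((\<forall>n. flinn_pair (x n) (f n)) \<longrightarrow> flinn_pair y g)"
proof -
  let ?P = "\<lambda>d l. prob_avg (d l) (\<lambda>n. rank_one (f n) (x n))"
  have avg_x: "weak_conv (\<lambda>k. prob_avg (c k) x) y" using i by (simp add: prob_avg_def)
  have avg_fy: "(\<lambda>k. prob_avg (c k) (\<lambda>n. f n y)) \<longlonglongrightarrow> 1" using ii by (simp add: prob_avg_def)
  have defect: "(\<lambda>l. ?P d l v - g v *\<^sub>R prob_avg (d l) x) \<longlonglongrightarrow> 0"
    if "\<And>l. fin_prob_seq (d l)" "(\<lambda>l. prob_avg (d l) (\<lambda>n. f n y)) \<longlonglongrightarrow> 1" for d v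
    using rank_one_average_defect_tendsto[OF smooth yg(1) _ yg(3) _ _ that] xf yg(2) by simp
  have wot: "wot_conv (?P c) (rank_one g y)"
    using wot_conv_rank_one[OF defect[OF c avg_fy] avg_x] .
  obtain d where d: "\<And>l. fin_prob_seq (d l)" "(\<lambda>l. prob_avg (d l) x) \<longlonglongrightarrow> y"
    "(\<lambda>l. prob_avg (d l) (\<lambda>n. f n y)) \<longlonglongrightarrow> 1"
    using strongly_convergent_averages[OF c avg_x avg_fy] by blast
  have sot: "sot_conv (?P d) (rank_one g y)"
    using sot_conv_rank_one[OF defect[OF d(1,3)] d(2)] .
  have "flinn_pair y g" if flinn: "\<forall>n. flinn_pair (x n) (f n)"
  proof -
    have "norm (id_blinfun - ?P d l) \<le> 1" for l
      using flinn by (intro norm_id_minus_average_le d(1)) (simp add: flinn_pair_def)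
    then have "norm (id_blinfun - rank_one g y) \<le> 1"
      by (rule norm_le_of_sot_limit[OF sot_conv_const_minus[OF sot]])
    then show ?thesis using flinn_pair_of_norm_le yg(1,3) flinn xf by blast
  qed
  with wot sot d(1) show ?thesis unfolding prob_avg_def by blast
qed

end
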